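(* Let $\Sigma=(\mathbf{x},\mathbf{F})$ be an LP seed of rank $n\ge2$ satisfying Condition 1.2. Let $y=\sum_{m=a}^{b}c_mx_1^m$ with $a\le b$ integers, $c_m\in R^{st}[x_2,x'_2,\dots,x_n,x'_n]$ and $c_a\ne0$. Then $LT(y)=\varphi(c_a)\,x_1^a$.
   Context: $R$ is a unique factorization domain containing $\mathbb{Z}$ and $\mathcal{F}$ is the field of rational functions in $n$ variables over $\mathrm{Frac}(R)$. An LP seed of rank $n$ is a pair $(\mathbf{x},\mathbf{F})$ where $\mathbf{x}=\{x_1,\dots,x_n\}$ is a transcendence basis of $\mathcal{F}$ over $\mathrm{Frac}(R)$ and $\mathbf{F}=\{F_1,\dots,F_n\}$ are irreducible polynomials in $R[x_1,\dots,x_n]$ with $x_j\nmid F_i$ for all $i,j$ and $F_i$ not involving $x_i$. The exchange Laurent polynomial is $\hat F_j=F_j/\prod_{k\neq j}x_k^{a_k}$, with $a_k\in\mathbb{Z}_{\ge0}$ maximal such that $F_k^{a_k}$ divides $F_j|_{x_k\leftarrow F_k/x'_k}$ in $R[x_1,\dots,x_{k-1},(x'_k)^{-1},x_{k+1},\dots,x_n]$. Set $x'_j=\hat F_j/x_j$. Lexicographic order on $\mathbb{Z}^n$: $\mathbf{a}\prec\mathbf{a}'$ if the first nonzero entry of $\mathbf{a}'-\mathbf{a}$ is positive; the lexicographically first monomial of a polynomial is its term with $\prec$-smallest exponent vector. Condition 1.2: for every $k\in[1,n]$, with $M_k$ the lexicographically first monomial of $F_k$: (i) $\hat F_k=F_k$;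 (ii) $M_k=x_{k+1}^{v_{k+1,k}}\cdots x_n^{v_{n,k}}$ (coefficient $1$) with $v_{\cdot,k}\in\mathbb{Z}_{\ge0}$ for $k\in[1,n-1]$, and $M_n=1$; (iii) if $k\ne1$ and $F_k$ involves $x_1$, then every monomial of $F_k-M_k$ is divisible by $x_1$; (iv) if $k\notin\{1,2\}$, $F_k$ does not involve $x_1$, and there is $i\in[2,k-1]$ such that $x_k$ divides $M_i$, then every monomial of $F_k-M_k$ is divisible by $x_i$. Under (i), $R[x_2,x'_2,\dots,x_n,x'_n]\subseteq R[x_1,x_2^{\pm1},\dots,x_n^{\pm1}]$; $\varphi$ is the restriction to $R[x_2,x'_2,\dots,x_n,x'_n]$ of the $R$-algebra homomorphism $R[x_1,x_2^{\pm1},\dots,x_n^{\pm1}]\to R[x_2^{\pm1},\dots,x_n^{\pm1}]$ with $x_1\mapsto0$, $x_i^{\pm1}\mapsto x_i^{\pm1}$ ($i\ge2$). $R^{st}[x_2,x'_2,\dots,x_n,x'_n]$ is the $R$-span of the monomials in $x_2,x'_2,\dots,x_n,x'_n$ containing no product $x_ix'_i$. For $y\in R[x_1^{\pm1},\dots,x_n^{\pm1}]$, $LT(y)$ is the sum of all terms (with nonzero coefficient) of the Laurent expansion of $y$ in $x_1,\dots,x_n$ having the smallest power of $x_1$. *)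

theory Defs
  imports "HOL-Library.Poly_Mapping" "HOL-Computational_Algebra.Factorial_Ring"
begin

text \<open>Laurent polynomials over a coefficient ring R in variables x_1, x_2, ...:
  finitely supported maps from integer exponent vectors to R.  Only the variables
  with index in {1..n} are used.  The transcendence basis x of the seed is identified
  with these formal variables (the whole statement lives in R[x_1^(+-1),...,x_n^(+-1)]).\<close>

type_synonym 'a lpoly = "(nat \<Rightarrow>\<^sub>0 int) \<Rightarrow>\<^sub>0 'a"

definition lconst :: "'a::zero \<Rightarrow> 'a lpoly" where
  "lconst c = Poly_Mapping.single 0 c"

definition xpow :: "nat \<Rightarrow> int \<Rightarrow> 'a::{zero,one} lpoly" where
  "xpow i m = Poly_Mapping.single (Poly_Mapping.single i m) 1"

definition xvar :: "nat \<Rightarrow> 'a::{zero,one} lpoly" where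
  "xvar i = xpow i 1"

definition xinv :: "nat \<Rightarrow> 'a::{zero,one} lpoly" where
  "xinv i = xpow i (-1)"

definition laurent_ring :: "nat \<Rightarrow> 'a::zero lpoly set" where
  "laurent_ring n = {p. \<forall>e\<in>Poly_Mapping.keys p. Poly_Mapping.keys e \<subseteq> {1..n}}"

definition poly_ring :: "nat \<Rightarrow> 'a::zero lpoly set" where
  "poly_ring n = {p. \<forall>e\<in>Poly_Mapping.keys p. Poly_Mapping.keys e \<subseteq> {1..n} \<and> (\<forall>i. 0 \<le> Poly_Mapping.lookup e i)}"

text \<open>The ring R[x_1,...,x_{k-1},(x'_k)^{-1},x_{k+1},...,x_n], where the formal
  variable in slot k plays the role of x'_k.\<close>
definition subst_ring :: "nat \<Rightarrow> nat \<Rightarrow> 'a::zero lpoly set" where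
  "subst_ring n k = {p. \<forall>e\<in>Poly_Mapping.keys p. Poly_Mapping.keys e \<subseteq> {1..n} \<and>
      (\<forall>i. i \<noteq> k \<longrightarrow> 0 \<le> Poly_Mapping.lookup e i) \<and> Poly_Mapping.lookup e k \<le> 0}"

definition dvd_in :: "'a::times set \<Rightarrow> 'a \<Rightarrow> 'a \<Rightarrow> bool" where
  "dvd_in S a b \<longleftrightarrow> (\<exists>c\<in>S. b = a * c)"

definition unit_in :: "'a::{times,one} set \<Rightarrow> 'a \<Rightarrow> bool" where
  "unit_in S u \<longleftrightarrow> u \<in> S \<and> (\<exists>v\<in>S. u * v = 1)"

definition irreducible_in :: "'a::{times,one,zero} set \<Rightarrow> 'a \<Rightarrow> bool" where
  "irreducible_in S p \<longleftrightarrow> p \<in> S \<and> p \<noteq> 0 \<and> \<not> unit_in S p \<and>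
     (\<forall>a\<in>S. \<forall>b\<in>S. p = a * b \<longrightarrow> unit_in S a \<or> unit_in S b)"

definition involves :: "'a::zero lpoly \<Rightarrow> nat \<Rightarrow> bool" where
  "involves p i \<longleftrightarrow> (\<exists>e\<in>Poly_Mapping.keys p. Poly_Mapping.lookup e i \<noteq> 0)"

text \<open>Substitution x_k \<leftarrow> q in a polynomial p (p with nonnegative exponents).\<close>
definition subst_var :: "nat \<Rightarrow> 'a::comm_ring_1 lpoly \<Rightarrow> 'a lpoly \<Rightarrow> 'a lpoly" where
  "subst_var k q p = (\<Sum>e\<in>Poly_Mapping.keys p.
      Poly_Mapping.single (e - Poly_Mapping.single k (Poly_Mapping.lookup e k)) (Poly_Mapping.lookup p e)
      * q ^ nat (Poly_Mapping.lookup e k))"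

definition LP_seed :: "nat \<Rightarrow> (nat \<Rightarrow> 'a::comm_ring_1 lpoly) \<Rightarrow> bool" where
  "LP_seed n F \<longleftrightarrow> (\<forall>i\<in>{1..n}.
      irreducible_in (poly_ring n) (F i) \<and>
      (\<forall>j\<in>{1..n}. \<not> dvd_in (poly_ring n) (xvar j) (F i)) \<and>
      \<not> involves (F i) i)"

text \<open>The exponent a_k in the definition of the exchange Laurent polynomial of F_j:
  maximal a with F_k^a dividing F_j|_{x_k <- F_k/x'_k} in
  R[x_1,...,(x'_k)^{-1},...,x_n].\<close>
definition exch_exp :: "nat \<Rightarrow> (nat \<Rightarrow> 'a::comm_ring_1 lpoly) \<Rightarrow> nat \<Rightarrow> nat \<Rightarrow> nat" where
  "exch_exp n F j k = (GREATEST a. dvd_in (subst_ring n k) (F k ^ a)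
       (subst_var k (F k * xinv k) (F j)))"

definition hatF :: "nat \<Rightarrow> (nat \<Rightarrow> 'a::comm_ring_1 lpoly) \<Rightarrow> nat \<Rightarrow> 'a lpoly" where
  "hatF n F j = F j * (\<Prod>k\<in>{1..n} - {j}. xinv k ^ exch_exp n F j k)"

definition xprime :: "nat \<Rightarrow> (nat \<Rightarrow> 'a::comm_ring_1 lpoly) \<Rightarrow> nat \<Rightarrow> 'a lpoly" where
  "xprime n F j = hatF n F j * xinv j"

definition lex_less :: "(nat \<Rightarrow>\<^sub>0 int) \<Rightarrow> (nat \<Rightarrow>\<^sub>0 int) \<Rightarrow> bool" where
  "lex_less e e' \<longleftrightarrow> (\<exists>i. (\<forall>j<i. Poly_Mapping.lookup e j = Poly_Mapping.lookup e' j) \<and> Poly_Mapping.lookup e i < Poly_Mapping.lookup e' i)"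

definition lexfirst_exp :: "'a::zero lpoly \<Rightarrow> (nat \<Rightarrow>\<^sub>0 int)" where
  "lexfirst_exp p = (THE e. e \<in> Poly_Mapping.keys p \<and> (\<forall>e'\<in>Poly_Mapping.keys p. e' \<noteq> e \<longrightarrow> lex_less e e'))"

definition lexfirst :: "'a::zero lpoly \<Rightarrow> 'a lpoly" where
  "lexfirst p = Poly_Mapping.single (lexfirst_exp p) (Poly_Mapping.lookup p (lexfirst_exp p))"

definition all_monos_div :: "'a::zero lpoly \<Rightarrow> nat \<Rightarrow> bool" where
  "all_monos_div p i \<longleftrightarrow> (\<forall>e\<in>Poly_Mapping.keys p. 1 \<le> Poly_Mapping.lookup e i)"

definition condition_1_2 :: "nat \<Rightarrow> (nat \<Rightarrow> 'a::comm_ring_1 lpoly) \<Rightarrow> bool" where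
  "condition_1_2 n F \<longleftrightarrow> (\<forall>k\<in>{1..n}.
     hatF n F k = F k \<and>
     Poly_Mapping.lookup (F k) (lexfirst_exp (F k)) = 1 \<and>
     Poly_Mapping.keys (lexfirst_exp (F k)) \<subseteq> {k+1..n} \<and>
     (k \<noteq> 1 \<and> involves (F k) 1 \<longrightarrow> all_monos_div (F k - lexfirst (F k)) 1) \<and>
     (\<forall>i\<in>{2..k-1}. k \<notin> {1,2} \<and> \<not> involves (F k) 1 \<and> 1 \<le> Poly_Mapping.lookup (lexfirst_exp (F i)) k
        \<longrightarrow> all_monos_div (F k - lexfirst (F k)) i))"

definition st_mono :: "nat \<Rightarrow> (nat \<Rightarrow> 'a::comm_ring_1 lpoly) \<Rightarrow> (nat \<Rightarrow> nat) \<Rightarrow> (nat \<Rightarrow> nat) \<Rightarrow> 'a lpoly" where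
  "st_mono n F a b = (\<Prod>i\<in>{2..n}. xvar i ^ a i * xprime n F i ^ b i)"

definition Rst :: "nat \<Rightarrow> (nat \<Rightarrow> 'a::comm_ring_1 lpoly) \<Rightarrow> 'a lpoly set" where
  "Rst n F = {p. \<exists>T c. finite T \<and>
       (\<forall>(a,b)\<in>T. \<forall>i\<in>{2..n}. a i = 0 \<or> b i = 0) \<and>
       p = (\<Sum>(a,b)\<in>T. lconst (c (a,b)) * st_mono n F a b)}"

text \<open>phi: x_1 \<mapsto> 0, x_i^{\<plusminus>1} \<mapsto> x_i^{\<plusminus>1} (applied to elements with nonnegative x_1-exponents)\<close>
definition phi :: "'a::comm_ring_1 lpoly \<Rightarrow> 'a lpoly" where
  "phi p = (\<Sum>e\<in>{e\<in>Poly_Mapping.keys p. Poly_Mapping.lookup e 1 = 0}. Poly_Mapping.single e (Poly_Mapping.lookup p e))"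

definition LT :: "'a::comm_ring_1 lpoly \<Rightarrow> 'a lpoly" where
  "LT y = (let m = Min ((\<lambda>e. Poly_Mapping.lookup e 1) ` Poly_Mapping.keys y) in
      (\<Sum>e\<in>{e\<in>Poly_Mapping.keys y. Poly_Mapping.lookup e 1 = m}. Poly_Mapping.single e (Poly_Mapping.lookup y e)))"

end

theory Submission
  imports Defs
begin

text \<open>All elements of \<open>R\<^sup>s\<^sup>t[x\<^sub>2,x'\<^sub>2,\<dots>,x\<^sub>n,x'\<^sub>n]\<close> have only nonnegative powers of \<open>x\<^sub>1\<close>, so the
  terms of \<open>y\<close> of \<open>x\<^sub>1\<close>-degree \<open>a\<close> come from \<open>c\<^sub>a\<close> alone, and \<open>LT(y) = \<phi>(c\<^sub>a) x\<^sub>1\<^sup>a\<close> as soon as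
  \<open>c\<^sub>a\<close> has a term free of \<open>x\<^sub>1\<close>.  For this, order exponents lexicographically.  By Condition 1.2
  the lowest term of \<open>F\<^sub>i\<close> is a monic monomial in \<open>x\<^sub>i\<^sub>+\<^sub>1,\<dots>,x\<^sub>n\<close>, so every standard monomial has a
  monic lowest term free of \<open>x\<^sub>1\<close>, and its exponent depends unitriangularly on the exponents
  \<open>(a\<^sub>i, b\<^sub>i)\<close>.  Distinct standard monomials thus have distinct lowest exponents, and the smallest
  one surviving in \<open>c\<^sub>a\<close> is a term of \<open>c\<^sub>a\<close> free of \<open>x\<^sub>1\<close>.\<close>

lemma lookup_mult_single_one:
  fixes p :: "'k::ab_group_add \<Rightarrow>\<^sub>0 'a::comm_semiring_1"
  shows "Poly_Mapping.lookup (p * Poly_Mapping.single k 1) e = Poly_Mapping.lookup p (e - k)"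
proof -
  have shift: "(\<Sum>q. (1::'a) when k = q \<and> e = l + q) = (1 when e = l + k)" for l
  proof -
    have "(\<Sum>q. (1::'a) when k = q \<and> e = l + q) = (\<Sum>q. (1 when e = l + q) when k = q)"
      by (rule Sum_any.cong) (simp add: when_def)
    then show ?thesis by simp
  qed
  have "Poly_Mapping.lookup (p * Poly_Mapping.single k 1) e = (\<Sum>l. Poly_Mapping.lookup p l * (1 when e = l + k))"
    by (simp add: lookup_mult lookup_single when_when shift)
  also have "\<dots> = (\<Sum>l. Poly_Mapping.lookup p l when l = e - k)"
    by (rule Sum_any.cong) (auto simp: when_def eq_diff_eq)
  finally show ?thesis by simp
qed

lemma lookup_single_zero_mult:
  fixes q :: "'k::comm_monoid_add \<Rightarrow>\<^sub>0 'a::comm_semiring_1"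
  shows "Poly_Mapping.lookup (Poly_Mapping.single 0 d * q) e = d * Poly_Mapping.lookup q e"
  unfolding mult_map_scale_conv_mult[symmetric] by (simp add: map.rep_eq when_def)

lemma lookup_sum_single_filter:
  fixes p :: "'k \<Rightarrow>\<^sub>0 'a::comm_monoid_add"
  shows "Poly_Mapping.lookup (\<Sum>e\<in>{e\<in>Poly_Mapping.keys p. P e}. Poly_Mapping.single e (Poly_Mapping.lookup p e)) k
     = (if P k then Poly_Mapping.lookup p k else 0)"
proof -
  have "Poly_Mapping.lookup (\<Sum>e\<in>{e\<in>Poly_Mapping.keys p. P e}. Poly_Mapping.single e (Poly_Mapping.lookup p e)) k
      = (\<Sum>e\<in>{e\<in>Poly_Mapping.keys p. P e}. if e = k then Poly_Mapping.lookup p e else 0)"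
    unfolding lookup_sum by (rule sum.cong) (auto simp: lookup_single when_def)
  also have "\<dots> = (if P k then Poly_Mapping.lookup p k else 0)"
    by (auto simp: sum.delta' in_keys_iff)
  finally show ?thesis .
qed

lemma keys_mult_ge:
  fixes p q :: "'k::ordered_comm_monoid_add \<Rightarrow>\<^sub>0 'a::comm_semiring_0"
  assumes "\<forall>e\<in>Poly_Mapping.keys p. k \<le> e" "\<forall>e\<in>Poly_Mapping.keys q. l \<le> e"
    and "e \<in> Poly_Mapping.keys (p * q)"
  shows "k + l \<le> e"
  using assms keys_mult[of p q] by (force intro: add_mono)

definition lowest_monic :: "('k::linorder \<Rightarrow>\<^sub>0 'a::{zero,one}) \<Rightarrow> 'k \<Rightarrow> bool" where
  "lowest_monic p k \<longleftrightarrow> Poly_Mapping.lookup p k = 1 \<and> (\<forall>e\<in>Poly_Mapping.keys p. k \<le> e)"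

lemma lowest_monic_mult:
  fixes p q :: "'k::{ordered_cancel_comm_monoid_add, linorder} \<Rightarrow>\<^sub>0 'a::comm_semiring_1"
  assumes p: "lowest_monic p k" and q: "lowest_monic q l"
  shows "lowest_monic (p * q) (k + l)"
proof -
  have only_lowest: "a = k \<and> b = l"
    if "Poly_Mapping.lookup p a \<noteq> 0" "Poly_Mapping.lookup q b \<noteq> 0" "k + l = a + b" for a b
  proof -
    have "k \<le> a" "l \<le> b" using p q that(1,2) unfolding lowest_monic_def by (auto simp: in_keys_iff)
    moreover have "\<not> k < a" using add_less_le_mono[OF _ \<open>l \<le> b\<close>, of k a] that(3) by auto
    ultimately show ?thesis using that(3) by (auto dest: add_left_imp_eq)
  qed
  have inner: "Poly_Mapping.lookup p a * (\<Sum>b. Poly_Mapping.lookup q b when k + l = a + b)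
      = (Poly_Mapping.lookup p a * Poly_Mapping.lookup q l when a = k)" for a
  proof (cases "Poly_Mapping.lookup p a = 0")
    case False
    have "(\<Sum>b. Poly_Mapping.lookup q b when k + l = a + b)
        = (\<Sum>b. (Poly_Mapping.lookup q l when a = k) when b = l)"
      by (rule Sum_any.cong) (auto simp: when_def dest: only_lowest[OF False])
    then show ?thesis by (simp add: when_def)
  qed simp
  have "Poly_Mapping.lookup (p * q) (k + l) = (\<Sum>a. Poly_Mapping.lookup p a * Poly_Mapping.lookup q l when a = k)"
    unfolding lookup_mult inner ..
  also have "\<dots> = 1" using p q by (simp add: lowest_monic_def)
  finally show ?thesis
    using keys_mult_ge[of p k q l] p q unfolding lowest_monic_def by blast
qed

lemma lowest_monic_one: "lowest_monic (1 :: 'k::{linorder, monoid_add} \<Rightarrow>\<^sub>0 'a::{zero_neq_one}) 0"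
  by (simp add: lowest_monic_def)

lemma lowest_monic_prod:
  fixes f :: "'i \<Rightarrow> ('k::{ordered_cancel_comm_monoid_add, linorder} \<Rightarrow>\<^sub>0 'a::comm_semiring_1)"
  assumes "\<And>i. i \<in> I \<Longrightarrow> lowest_monic (f i) (g i)"
  shows "lowest_monic (prod f I) (sum g I)"
  using assms by (induction I rule: infinite_finite_induct) (auto intro: lowest_monic_one lowest_monic_mult)

lemma lowest_monic_power:
  fixes p :: "'k::{ordered_cancel_comm_monoid_add, linorder} \<Rightarrow>\<^sub>0 'a::comm_semiring_1"
  assumes "lowest_monic p k"
  shows "lowest_monic (p ^ m) (\<Sum>_<m. k)"
  using lowest_monic_prod[of "{..<m}" "\<lambda>_. p" "\<lambda>_. k"] assms by simp

lemma lowest_monic_single: "lowest_monic (Poly_Mapping.single k 1 :: 'k::linorder \<Rightarrow>\<^sub>0 'a::zero_neq_one) k"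
  by (simp add: lowest_monic_def)

lemma lex_less_iff_less: "lex_less e e' \<longleftrightarrow> e < e'"
  by (simp add: lex_less_def less_poly_mapping.rep_eq less_fun_def) blast

lemma lexfirst_exp_eq_Min:
  assumes "p \<noteq> 0"
  shows "lexfirst_exp p = Min (Poly_Mapping.keys p)"
  unfolding lexfirst_exp_def
proof (rule the_equality)
  have "Poly_Mapping.keys p \<noteq> {}" using assms by simp
  then show "Min (Poly_Mapping.keys p) \<in> Poly_Mapping.keys p \<and>
      (\<forall>e'\<in>Poly_Mapping.keys p. e' \<noteq> Min (Poly_Mapping.keys p) \<longrightarrow> lex_less (Min (Poly_Mapping.keys p)) e')"
    by (auto simp: lex_less_iff_less order.strict_iff_order)
next
  fix e
  assume "e \<in> Poly_Mapping.keys p \<and> (\<forall>e'\<in>Poly_Mapping.keys p. e' \<noteq> e \<longrightarrow> lex_less e e')"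
  then show "e = Min (Poly_Mapping.keys p)"
    by (intro Min_eqI[symmetric]) (auto simp: lex_less_iff_less le_less)
qed

lemma lowest_monic_lexfirst:
  assumes "p \<noteq> 0" "Poly_Mapping.lookup p (lexfirst_exp p) = 1"
  shows "lowest_monic p (lexfirst_exp p)"
  using assms by (simp add: lowest_monic_def lexfirst_exp_eq_Min)

lemma lowest_monic_distinct_combination:
  fixes q :: "'k::linorder \<Rightarrow> ('k \<Rightarrow>\<^sub>0 'a::comm_semiring_1)"
  assumes "finite V" "\<And>v. v \<in> V \<Longrightarrow> lowest_monic (q v) v" "\<exists>v\<in>V. d v \<noteq> 0"
  shows "\<exists>v\<in>V. d v \<noteq> 0 \<and> (\<Sum>w\<in>V. d w * Poly_Mapping.lookup (q w) v) = d v"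
proof -
  define v0 where "v0 = Min {v\<in>V. d v \<noteq> 0}"
  have v0: "v0 \<in> V" "d v0 \<noteq> 0" and v0_le: "\<And>v. v \<in> V \<Longrightarrow> d v \<noteq> 0 \<Longrightarrow> v0 \<le> v"
    using Min_in[of "{v\<in>V. d v \<noteq> 0}"] Min_le[of "{v\<in>V. d v \<noteq> 0}"] assms(1,3)
    unfolding v0_def by auto
  have "d w * Poly_Mapping.lookup (q w) v0 = (if w = v0 then d v0 else 0)" if "w \<in> V" for w
  proof (cases "w = v0 \<or> d w = 0")
    case True
    then show ?thesis using assms(2)[OF that] by (auto simp: lowest_monic_def)
  next
    case False
    then have "v0 < w" using v0_le[OF that] by auto
    then have "v0 \<notin> Poly_Mapping.keys (q w)" using assms(2)[OF that] by (auto simp: lowest_monic_def)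
    then show ?thesis using False by (simp add: in_keys_iff)
  qed
  then have "(\<Sum>w\<in>V. d w * Poly_Mapping.lookup (q w) v0) = d v0"
    using v0(1) assms(1) by (simp add: sum.delta)
  then show ?thesis using v0 by blast
qed

text \<open>Terms with equal lowest exponents coincide and are merged; the smallest lowest exponent
  whose merged coefficient survives is then a key of the combination.\<close>
lemma lowest_monic_combination:
  fixes p :: "'t \<Rightarrow> ('k::{comm_monoid_add, linorder} \<Rightarrow>\<^sub>0 'a::comm_semiring_1)"
  assumes T: "finite T"
    and lowest: "\<And>t. t \<in> T \<Longrightarrow> lowest_monic (p t) (E t)"
    and determined: "\<And>t t'. t \<in> T \<Longrightarrow> t' \<in> T \<Longrightarrow> E t = E t' \<Longrightarrow> p t = p t'"
    and nonzero: "(\<Sum>t\<in>T. Poly_Mapping.single 0 (co t) * p t) \<noteq> 0"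
  shows "\<exists>t\<in>T. Poly_Mapping.lookup (\<Sum>t\<in>T. Poly_Mapping.single 0 (co t) * p t) (E t) \<noteq> 0"
proof -
  define c where "c = (\<Sum>t\<in>T. Poly_Mapping.single 0 (co t) * p t)"
  define q where "q v = p (inv_into T E v)" for v
  define d where "d v = (\<Sum>t\<in>{t\<in>T. E t = v}. co t)" for v
  have p_q: "p t = q (E t)" if "t \<in> T" for t
  proof -
    have "E t \<in> E ` T" using that by blast
    then show ?thesis unfolding q_def using that by (intro determined) (simp_all add: inv_into_into f_inv_into_f)
  qed
  have lookup_c: "Poly_Mapping.lookup c e = (\<Sum>v\<in>E ` T. d v * Poly_Mapping.lookup (q v) e)" for e
  proof -
    have "Poly_Mapping.lookup c e = (\<Sum>t\<in>T. co t * Poly_Mapping.lookup (q (E t)) e)"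
      unfolding c_def lookup_sum lookup_single_zero_mult by (rule sum.cong) (simp_all add: p_q)
    also have "\<dots> = (\<Sum>v\<in>E ` T. \<Sum>t\<in>{t\<in>T. E t = v}. co t * Poly_Mapping.lookup (q (E t)) e)"
      by (rule sum.image_gen[OF T])
    also have "\<dots> = (\<Sum>v\<in>E ` T. d v * Poly_Mapping.lookup (q v) e)"
      unfolding d_def sum_distrib_right by (intro sum.cong) auto
    finally show ?thesis .
  qed
  have "\<exists>v\<in>E ` T. d v \<noteq> 0"
  proof (rule ccontr)
    assume "\<not> ?thesis"
    then have "c = 0" by (intro poly_mapping_eqI) (auto simp: lookup_c intro: sum.neutral)
    then show False using nonzero c_def by simp
  qed
  moreover have "lowest_monic (q v) v" if "v \<in> E ` T" for v
    using that lowest p_q by auto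
  ultimately obtain v where v: "v \<in> E ` T" "d v \<noteq> 0"
      "(\<Sum>w\<in>E ` T. d w * Poly_Mapping.lookup (q w) v) = d v"
    using lowest_monic_distinct_combination[of "E ` T" q d] T by blast
  then have "Poly_Mapping.lookup c v \<noteq> 0" by (simp add: lookup_c)
  then show ?thesis using v(1) unfolding c_def by blast
qed

definition nonneg_exp :: "nat \<Rightarrow> 'a::zero lpoly \<Rightarrow> bool" where
  "nonneg_exp i p \<longleftrightarrow> (\<forall>e\<in>Poly_Mapping.keys p. 0 \<le> Poly_Mapping.lookup e i)"

lemma nonneg_exp_mult:
  "nonneg_exp i p \<Longrightarrow> nonneg_exp i q \<Longrightarrow> nonneg_exp i (p * q :: 'a::comm_semiring_0 lpoly)"
  unfolding nonneg_exp_def using keys_mult[of p q] by (force simp: lookup_add)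

lemma nonneg_exp_prod:
  "(\<And>j. j \<in> J \<Longrightarrow> nonneg_exp i (f j)) \<Longrightarrow> nonneg_exp i (prod f J :: 'a::comm_semiring_1 lpoly)"
proof (induction J rule: infinite_finite_induct)
  case (insert j J)
  then show ?case by (simp add: nonneg_exp_mult)
qed (simp_all add: nonneg_exp_def)

lemma nonneg_exp_power:
  "nonneg_exp i p \<Longrightarrow> nonneg_exp i (p ^ m :: 'a::comm_semiring_1 lpoly)"
  using nonneg_exp_prod[of "{..<m}" i "\<lambda>_. p"] by simp

lemma nonneg_exp_sum:
  "(\<And>j. j \<in> J \<Longrightarrow> nonneg_exp i (f j)) \<Longrightarrow> nonneg_exp i (sum f J :: 'a::comm_monoid_add lpoly)"
proof (induction J rule: infinite_finite_induct)
  case (insert j J)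
  then show ?case using keys_add[of "f j" "sum f J"] by (auto simp: nonneg_exp_def)
qed (auto simp: nonneg_exp_def)

lemma nonneg_exp_xpow: "i \<noteq> j \<Longrightarrow> nonneg_exp i (xpow j m)"
  by (simp add: nonneg_exp_def xpow_def lookup_single)

lemma nonneg_exp_lconst: "nonneg_exp i (lconst d)"
  by (simp add: nonneg_exp_def lconst_def)

lemma lookup_phi:
  "Poly_Mapping.lookup (phi p) e = (if Poly_Mapping.lookup e 1 = 0 then Poly_Mapping.lookup p e else 0)"
  unfolding phi_def by (rule lookup_sum_single_filter)

lemma lookup_x1_expansion:
  fixes c :: "int \<Rightarrow> 'a::comm_ring_1 lpoly"
  assumes "a \<le> b" and nonneg: "\<And>m. m \<in> {a..b} \<Longrightarrow> nonneg_exp 1 (c m)"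
    and "Poly_Mapping.lookup e 1 \<le> a"
  shows "Poly_Mapping.lookup (\<Sum>m\<in>{a..b}. c m * xpow 1 m) e
    = (if Poly_Mapping.lookup e 1 = a then Poly_Mapping.lookup (c a) (e - Poly_Mapping.single 1 a) else 0)"
proof -
  have "Poly_Mapping.lookup (c m) (e - Poly_Mapping.single 1 m)
      = (if m = a \<and> Poly_Mapping.lookup e 1 = a then Poly_Mapping.lookup (c a) (e - Poly_Mapping.single 1 a) else 0)"
    if m: "m \<in> {a..b}" for m
  proof (cases "m = a \<and> Poly_Mapping.lookup e 1 = a")
    case False
    then have "Poly_Mapping.lookup (e - Poly_Mapping.single 1 m) 1 < 0"
      using m assms(3) by (auto simp: lookup_minus)
    then have "e - Poly_Mapping.single 1 m \<notin> Poly_Mapping.keys (c m)"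
      using nonneg[OF m] by (auto simp: nonneg_exp_def)
    then show ?thesis using False by (auto simp: in_keys_iff)
  qed simp
  then have "(\<Sum>m\<in>{a..b}. Poly_Mapping.lookup (c m) (e - Poly_Mapping.single 1 m))
      = (\<Sum>m\<in>{a..b}. if m = a then (if Poly_Mapping.lookup e 1 = a
           then Poly_Mapping.lookup (c a) (e - Poly_Mapping.single 1 a) else 0) else 0)"
    by (intro sum.cong) auto
  then show ?thesis
    using assms(1) by (simp add: lookup_sum xpow_def lookup_mult_single_one)
qed

lemma LT_x1_expansion:
  fixes c :: "int \<Rightarrow> 'a::comm_ring_1 lpoly"
  assumes "a \<le> b" and nonneg: "\<And>m. m \<in> {a..b} \<Longrightarrow> nonneg_exp 1 (c m)" and "phi (c a) \<noteq> 0"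
  shows "LT (\<Sum>m\<in>{a..b}. c m * xpow 1 m) = phi (c a) * xpow 1 a"
proof -
  define y where "y = (\<Sum>m\<in>{a..b}. c m * xpow 1 m)"
  have lookup_y: "Poly_Mapping.lookup y e
      = (if Poly_Mapping.lookup e 1 = a then Poly_Mapping.lookup (c a) (e - Poly_Mapping.single 1 a) else 0)"
    if "Poly_Mapping.lookup e 1 \<le> a" for e
    unfolding y_def using lookup_x1_expansion[OF assms(1) nonneg that] .
  have above: "a \<le> Poly_Mapping.lookup e 1" if "e \<in> Poly_Mapping.keys y" for e
  proof (rule ccontr)
    assume "\<not> a \<le> Poly_Mapping.lookup e 1"
    then have "Poly_Mapping.lookup y e = 0" using lookup_y[of e] by simp
    then show False using that by (simp add: in_keys_iff)
  qed
  obtain v where v: "Poly_Mapping.lookup v 1 = 0" "Poly_Mapping.lookup (c a) v \<noteq> 0"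
    using assms(3) by (metis lookup_phi poly_mapping_eqI lookup_zero)
  have exp_a: "Poly_Mapping.lookup (v + Poly_Mapping.single 1 a) 1 = a"
    using v(1) by (simp add: lookup_add)
  then have "v + Poly_Mapping.single 1 a \<in> Poly_Mapping.keys y"
    using v(2) lookup_y[of "v + Poly_Mapping.single 1 a"] by (simp add: in_keys_iff)
  then have "a \<in> (\<lambda>e. Poly_Mapping.lookup e 1) ` Poly_Mapping.keys y"
    using exp_a by (metis rev_image_eqI)
  then have "Min ((\<lambda>e. Poly_Mapping.lookup e 1) ` Poly_Mapping.keys y) = a"
    using above by (intro Min_eqI) auto
  then have "Poly_Mapping.lookup (LT y) e
      = (if Poly_Mapping.lookup e 1 = a then Poly_Mapping.lookup y e else 0)" for e
    unfolding LT_def Let_def by (simp add: lookup_sum_single_filter)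
  also have "\<dots> e = Poly_Mapping.lookup (phi (c a) * xpow 1 a) e" for e
    using lookup_y[of e] by (simp add: lookup_phi xpow_def lookup_mult_single_one lookup_minus)
  finally show ?thesis unfolding y_def by (intro poly_mapping_eqI)
qed

text \<open>Lowest exponent of the standard monomial with exponent vectors \<open>a\<close>, \<open>b\<close>, provided
  \<open>M i - e\<^sub>i\<close> is the lowest exponent of \<open>x'\<^sub>i\<close> (with \<open>M i\<close> that of \<open>F\<^sub>i\<close>).\<close>
definition std_exp :: "nat \<Rightarrow> (nat \<Rightarrow> (nat \<Rightarrow>\<^sub>0 int)) \<Rightarrow> (nat \<Rightarrow> nat) \<Rightarrow> (nat \<Rightarrow> nat) \<Rightarrow> nat \<Rightarrow>\<^sub>0 int" where
  "std_exp n M a b =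
     (\<Sum>i\<in>{2..n}. (\<Sum>_<a i. Poly_Mapping.single i 1) + (\<Sum>_<b i. M i + Poly_Mapping.single i (-1)))"

lemma lookup_std_exp_1:
  assumes "\<forall>i\<in>{2..n}. 1 \<notin> Poly_Mapping.keys (M i)"
  shows "Poly_Mapping.lookup (std_exp n M a b) 1 = 0"
  using assms unfolding std_exp_def lookup_sum lookup_add lookup_single
  by (auto simp: in_keys_iff when_def intro!: sum.neutral)

lemma lookup_std_exp_triangular:
  assumes M: "\<forall>i\<in>{2..n}. Poly_Mapping.keys (M i) \<subseteq> {i+1..n}" and j: "j \<in> {2..n}"
  shows "Poly_Mapping.lookup (std_exp n M a b) j
    = int (a j) - int (b j) + (\<Sum>i\<in>{2..<j}. int (b i) * Poly_Mapping.lookup (M i) j)"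
proof -
  define f where "f i = (if i < j then int (b i) * Poly_Mapping.lookup (M i) j
    else if i = j then int (a j) - int (b j) else 0)" for i
  have factor: "Poly_Mapping.lookup ((\<Sum>_<a i. Poly_Mapping.single i 1) + (\<Sum>_<b i. M i + Poly_Mapping.single i (-1))) j
      = f i" if "i \<in> {2..n}" for i
  proof -
    have "j \<le> i \<Longrightarrow> Poly_Mapping.lookup (M i) j = 0"
      using M that by (force simp: in_keys_iff)
    then show ?thesis
      unfolding lookup_add lookup_sum lookup_single by (auto simp: f_def when_def algebra_simps)
  qed
  have "Poly_Mapping.lookup (std_exp n M a b) j = (\<Sum>i\<in>{2..<Suc n}. f i)"
    unfolding std_exp_def lookup_sum atLeastLessThanSuc_atLeastAtMost
    by (intro sum.cong refl factor) auto
  also have "\<dots> = (\<Sum>i\<in>{2..<j}. f i) + (\<Sum>i\<in>{j..<Suc n}. f i)"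
    using j by (intro sum.atLeastLessThan_concat[symmetric]) auto
  also have "(\<Sum>i\<in>{j..<Suc n}. f i) = int (a j) - int (b j)"
    using j by (simp add: f_def)
  finally show ?thesis by (simp add: f_def)
qed

text \<open>Unitriangularity: the \<open>x\<^sub>j\<close>-exponent is \<open>a j - b j\<close> plus terms involving only the
  \<open>b i\<close> with \<open>i < j\<close>, and for standard monomials \<open>a j - b j\<close> determines \<open>a j\<close> and \<open>b j\<close>.\<close>
lemma std_exp_inj:
  assumes M: "\<forall>i\<in>{2..n}. Poly_Mapping.keys (M i) \<subseteq> {i+1..n}"
    and std: "\<forall>i\<in>{2..n}. a i = 0 \<or> b i = 0" and std': "\<forall>i\<in>{2..n}. a' i = 0 \<or> b' i = 0"
    and eq: "std_exp n M a b = std_exp n M a' b'"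
  shows "\<forall>i\<in>{2..n}. a i = a' i \<and> b i = b' i"
proof -
  have "j \<in> {2..n} \<longrightarrow> a j = a' j \<and> b j = b' j" for j
  proof (induction j rule: less_induct)
    case (less j)
    show ?case
    proof
      assume j: "j \<in> {2..n}"
      have "(\<Sum>i\<in>{2..<j}. int (b i) * Poly_Mapping.lookup (M i) j)
          = (\<Sum>i\<in>{2..<j}. int (b' i) * Poly_Mapping.lookup (M i) j)"
        using less j by (intro sum.cong) auto
      then have "int (a j) - int (b j) = int (a' j) - int (b' j)"
        using eq lookup_std_exp_triangular[OF M j, of a b] lookup_std_exp_triangular[OF M j, of a' b']
        by simp
      then show "a j = a' j \<and> b j = b' j" using std std' j by force
    qed
  qed
  then show ?thesis by blast
qed

lemma st_mono_lowest_monic: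
  assumes "\<And>i. i \<in> {2..n} \<Longrightarrow> lowest_monic (xprime n F i) (M i + Poly_Mapping.single i (-1))"
  shows "lowest_monic (st_mono n F a b) (std_exp n M a b)"
proof -
  have "lowest_monic (xvar i :: 'a::comm_ring_1 lpoly) (Poly_Mapping.single i 1)" for i
    by (simp add: xvar_def xpow_def lowest_monic_single)
  then show ?thesis
    unfolding st_mono_def std_exp_def
    by (intro lowest_monic_prod lowest_monic_mult lowest_monic_power assms)
qed

lemma st_mono_nonneg_exp:
  assumes "\<And>i. i \<in> {2..n} \<Longrightarrow> nonneg_exp 1 (xprime n F i)"
  shows "nonneg_exp 1 (st_mono n F a b)"
  unfolding st_mono_def
  by (intro nonneg_exp_prod nonneg_exp_mult nonneg_exp_power assms) (auto simp: xvar_def nonneg_exp_xpow)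

lemma LP_seed_nonzero: "LP_seed n F \<Longrightarrow> i \<in> {1..n} \<Longrightarrow> F i \<noteq> 0"
  by (simp add: LP_seed_def irreducible_in_def)

lemma LP_seed_nonneg_exp: "LP_seed n F \<Longrightarrow> i \<in> {1..n} \<Longrightarrow> nonneg_exp j (F i)"
  by (auto simp: LP_seed_def irreducible_in_def poly_ring_def nonneg_exp_def)

lemma condition_1_2_xprime:
  "condition_1_2 n F \<Longrightarrow> i \<in> {1..n} \<Longrightarrow> xprime n F i = F i * xpow i (-1)"
  by (simp add: condition_1_2_def xprime_def xinv_def)

lemma xprime_lowest_monic:
  assumes "LP_seed n F" "condition_1_2 n F" "i \<in> {1..n}"
  shows "lowest_monic (xprime n F i) (lexfirst_exp (F i) + Poly_Mapping.single i (-1))"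
proof -
  have "lowest_monic (F i) (lexfirst_exp (F i))"
    using assms LP_seed_nonzero[OF assms(1,3)]
    by (intro lowest_monic_lexfirst) (auto simp: condition_1_2_def)
  then show ?thesis
    unfolding condition_1_2_xprime[OF assms(2,3)] xpow_def by (intro lowest_monic_mult lowest_monic_single)
qed

lemma xprime_nonneg_exp:
  assumes "LP_seed n F" "condition_1_2 n F" "i \<in> {2..n}"
  shows "nonneg_exp 1 (xprime n F i)"
  using assms by (auto simp: condition_1_2_xprime LP_seed_nonneg_exp nonneg_exp_xpow intro!: nonneg_exp_mult)

lemma Rst_nonneg_exp:
  assumes "LP_seed n F" "condition_1_2 n F" "c \<in> Rst n F"
  shows "nonneg_exp 1 c"
proof -
  obtain T co where "c = (\<Sum>(a, b)\<in>T. lconst (co (a, b)) * st_mono n F a b)"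
    using assms(3) unfolding Rst_def by blast
  moreover have "nonneg_exp 1 (st_mono n F a b)" for a b
    using xprime_nonneg_exp[OF assms(1,2)] by (rule st_mono_nonneg_exp)
  ultimately show ?thesis by (auto intro!: nonneg_exp_sum nonneg_exp_mult nonneg_exp_lconst)
qed

lemma phi_Rst_nonzero:
  assumes seed: "LP_seed n F" "condition_1_2 n F" and "c \<in> Rst n F" "c \<noteq> 0"
  shows "phi c \<noteq> 0"
proof -
  obtain T co where T: "finite T" "\<forall>(a, b)\<in>T. \<forall>i\<in>{2..n}. a i = 0 \<or> b i = 0"
    and c: "c = (\<Sum>(a, b)\<in>T. lconst (co (a, b)) * st_mono n F a b)"
    using assms(3) unfolding Rst_def by blast
  define M where "M i = lexfirst_exp (F i)" for i
  define p where "p t = st_mono n F (fst t) (snd t)" for t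
  define E where "E t = std_exp n M (fst t) (snd t)" for t
  have M: "\<forall>i\<in>{2..n}. Poly_Mapping.keys (M i) \<subseteq> {i+1..n}"
    using seed(2) by (auto simp: M_def condition_1_2_def)
  have c_sum: "c = (\<Sum>t\<in>T. Poly_Mapping.single 0 (co t) * p t)"
    unfolding c p_def lconst_def by (intro sum.cong) (simp_all add: split_beta)
  have lowest: "lowest_monic (p t) (E t)" for t
    unfolding p_def E_def M_def using xprime_lowest_monic[OF seed] by (intro st_mono_lowest_monic) auto
  have determined: "p t = p t'" if "t \<in> T" "t' \<in> T" "E t = E t'" for t t'
  proof -
    have std: "\<forall>i\<in>{2..n}. fst s i = 0 \<or> snd s i = 0" if "s \<in> T" for s
      using T(2) that by (auto simp: split_beta)
    have "\<forall>i\<in>{2..n}. fst t i = fst t' i \<and> snd t i = snd t' i"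
      using std_exp_inj[OF M std[OF that(1)] std[OF that(2)]] that(3) by (simp add: E_def)
    then show ?thesis unfolding p_def st_mono_def by (intro prod.cong) auto
  qed
  have "\<exists>t\<in>T. Poly_Mapping.lookup c (E t) \<noteq> 0"
    unfolding c_sum
  proof (rule lowest_monic_combination[OF T(1)])
    show "lowest_monic (p t) (E t)" for t by (rule lowest)
    show "p t = p t'" if "t \<in> T" "t' \<in> T" "E t = E t'" for t t' using that by (rule determined)
    show "(\<Sum>t\<in>T. Poly_Mapping.single 0 (co t) * p t) \<noteq> 0" using assms(4) c_sum by simp
  qed
  then obtain t where "Poly_Mapping.lookup c (E t) \<noteq> 0" by blast
  moreover have "Poly_Mapping.lookup (E t) 1 = 0"
    unfolding E_def using M by (intro lookup_std_exp_1) fastforce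
  ultimately have "Poly_Mapping.lookup (phi c) (E t) \<noteq> 0"
    by (simp add: lookup_phi)
  then show ?thesis by (metis lookup_zero)
qed

theorem lemma4p19:
  fixes n :: nat and F :: "nat \<Rightarrow> ('r::{factorial_semiring, idom, ring_char_0}) lpoly"
    and c :: "int \<Rightarrow> 'r lpoly" and a b :: int
  assumes "n \<ge> 2"
    and "LP_seed n F"
    and "condition_1_2 n F"
    and "a \<le> b"
    and "\<forall>m\<in>{a..b}. c m \<in> Rst n F"
    and "c a \<noteq> 0"
  shows "LT (\<Sum>m\<in>{a..b}. c m * xpow 1 m) = phi (c a) * xpow 1 a"
proof (rule LT_x1_expansion)
  show "a \<le> b" by fact
  show "nonneg_exp 1 (c m)" if "m \<in> {a..b}" for m
    using Rst_nonneg_exp assms(2,3,5) that by blast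
  show "phi (c a) \<noteq> 0"
    using phi_Rst_nonzero[OF assms(2,3) _ assms(6)] assms(4,5) by auto
qed

end
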